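(* Every fragile graph $G$ of girth at least $4$ with $|V(G)|\geq 3$ satisfies $|E(G)|\leq 2|V(G)|-4$. Consequently every non-null fragile graph of girth at least $4$ has a vertex of degree at most $3$ and is $4$-colourable.
   Context: All graphs are finite and simple. A graph is $k$-connected if it has at least $k+1$ vertices and no vertex cutset with at most $k-1$ vertices. A graph is fragile if it has no $3$-connected subgraph. The girth of a graph is the length of its shortest cycle (infinite if the graph is acyclic). *)

theory Defs
  imports Main "HOL-Library.Extended_Nat"
begin

definition graph :: "'a set \<Rightarrow> 'a set set \<Rightarrow> bool" where
  "graph V E \<longleftrightarrow> finite V \<and> (\<forall>e\<in>E. e \<subseteq> V \<and> card e = 2)"

definition subgraph :: "'a set \<Rightarrow> 'a set set \<Rightarrow> 'a set \<Rightarrow> 'a set set \<Rightarrow> bool" where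
  "subgraph V' E' V E \<longleftrightarrow> V' \<subseteq> V \<and> E' \<subseteq> E \<and> (\<forall>e\<in>E'. e \<subseteq> V')"

definition adj_rel :: "'a set set \<Rightarrow> ('a \<times> 'a) set" where
  "adj_rel E = {(x, y). {x, y} \<in> E}"

definition connected_graph :: "'a set \<Rightarrow> 'a set set \<Rightarrow> bool" where
  "connected_graph V E \<longleftrightarrow> (\<forall>u\<in>V. \<forall>v\<in>V. (u, v) \<in> (adj_rel E)\<^sup>*)"

definition delete_vertices :: "'a set \<Rightarrow> 'a set set \<Rightarrow> 'a set \<Rightarrow> 'a set \<times> 'a set set" where
  "delete_vertices V E S = (V - S, {e\<in>E. e \<inter> S = {}})"

definition k_connected :: "nat \<Rightarrow> 'a set \<Rightarrow> 'a set set \<Rightarrow> bool" where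
  "k_connected k V E \<longleftrightarrow> card V \<ge> k + 1 \<and>
     (\<forall>S. S \<subseteq> V \<and> card S \<le> k - 1 \<longrightarrow>
        connected_graph (fst (delete_vertices V E S)) (snd (delete_vertices V E S)))"

definition fragile :: "'a set \<Rightarrow> 'a set set \<Rightarrow> bool" where
  "fragile V E \<longleftrightarrow> \<not> (\<exists>V' E'. subgraph V' E' V E \<and> graph V' E' \<and> k_connected 3 V' E')"

definition is_cycle :: "'a set \<Rightarrow> 'a set set \<Rightarrow> 'a list \<Rightarrow> bool" where
  "is_cycle V E c \<longleftrightarrow> length c \<ge> 3 \<and> distinct c \<and> set c \<subseteq> V \<and>
     (\<forall>i < length c. {c ! i, c ! ((i + 1) mod length c)} \<in> E)"

definition girth :: "'a set \<Rightarrow> 'a set set \<Rightarrow> enat" where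
  "girth V E = (INF c \<in> {c. is_cycle V E c}. enat (length c))"

definition degree :: "'a set set \<Rightarrow> 'a \<Rightarrow> nat" where
  "degree E v = card {e\<in>E. v \<in> e}"

definition colourable :: "nat \<Rightarrow> 'a set \<Rightarrow> 'a set set \<Rightarrow> bool" where
  "colourable k V E \<longleftrightarrow> (\<exists>col :: 'a \<Rightarrow> nat. (\<forall>v\<in>V. col v < k) \<and>
     (\<forall>u v. {u, v} \<in> E \<longrightarrow> col u \<noteq> col v))"

end

theory Submission imports Defs begin

text \<open>A graph that is not 3-connected and has at least four vertices splits along a
set S of at most two vertices into two smaller graphs G[A \<union> S] and G[B \<union> S] which
together contain every edge; both are again fragile and triangle-free. Induction
on the number of vertices bounds the edges by 2n - 4, since the bound is
superadditive in this gluing: (2(a+s) - 4) + (2(b+s) - 4) \<le> 2(a+b+s) - 4 for s \<le> 2.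
As the bound fails for the single edge (n = 2), the induction carries the bound
function f with f 2 = 1. By the handshake lemma some vertex has degree at most 3,
and since fragility is hereditary, removing such vertices one at a time gives a
greedy 4-colouring.\<close>

definition triangle_free :: "'a set set \<Rightarrow> bool" where
  "triangle_free E \<longleftrightarrow> (\<nexists>a b c. {a, b} \<in> E \<and> {b, c} \<in> E \<and> {a, c} \<in> E)"

definition induced_edges :: "'a set set \<Rightarrow> 'a set \<Rightarrow> 'a set set" where
  "induced_edges E W = {e \<in> E. e \<subseteq> W}"

definition fragile_edge_bound :: "nat \<Rightarrow> nat" where
  "fragile_edge_bound n = (if n \<ge> 3 then 2 * n - 4 else if n = 2 then 1 else 0)"

lemma graph_edgeD:
  assumes "graph V E" and "{a, b} \<in> E"
  shows "a \<noteq> b" "a \<in> V" "b \<in> V"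
proof -
  have "card {a, b} = 2" "{a, b} \<subseteq> V" using assms by (auto simp: graph_def)
  thus "a \<noteq> b" "a \<in> V" "b \<in> V" by (auto simp: card_insert_if split: if_splits)
qed

lemma graph_edge_obtain:
  assumes "graph V E" and "e \<in> E"
  obtains x y where "e = {x, y}" "x \<noteq> y" "x \<in> V" "y \<in> V"
  using assms by (auto simp: graph_def card_2_iff)

lemma finite_edges: "graph V E \<Longrightarrow> finite E"
  unfolding graph_def
  by (rule finite_subset[of _ "Pow V"]) auto

lemma card_edges_le_choose: "graph V E \<Longrightarrow> card E \<le> card V choose 2"
proof -
  assume g: "graph V E"
  have "card E \<le> card {e. e \<subseteq> V \<and> card e = 2}"
    using g by (intro card_mono) (auto simp: graph_def)
  also have "\<dots> = card V choose 2" using g by (simp add: graph_def n_subsets)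
  finally show ?thesis .
qed

lemma triangle_free_subset: "triangle_free E \<Longrightarrow> E' \<subseteq> E \<Longrightarrow> triangle_free E'"
  unfolding triangle_free_def by blast

lemma girth_ge_4_imp_triangle_free:
  assumes g: "graph V E" and girth: "girth V E \<ge> 4"
  shows "triangle_free E"
  unfolding triangle_free_def
proof (intro notI, elim exE conjE)
  fix a b c assume ab: "{a, b} \<in> E" and bc: "{b, c} \<in> E" and ac: "{a, c} \<in> E"
  have "{c, a} \<in> E" using ac by (simp add: insert_commute)
  have "{[a, b, c] ! i, [a, b, c] ! ((i + 1) mod 3)} \<in> E" if "i < 3" for i
  proof -
    have "i = 0 \<or> i = 1 \<or> i = 2" using that by auto
    thus ?thesis using ab bc \<open>{c, a} \<in> E\<close> by auto
  qed
  hence "is_cycle V E [a, b, c]"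
    using graph_edgeD[OF g ab] graph_edgeD[OF g bc] graph_edgeD[OF g ac]
    by (simp add: is_cycle_def)
  hence "girth V E \<le> enat (length [a, b, c])" unfolding girth_def by (rule INF_lower[OF CollectI])
  hence "girth V E \<le> enat 3" by (simp add: numeral_3_eq_3)
  with girth have "(4::enat) \<le> enat 3" by (rule order_trans)
  thus False by (simp add: numeral_eq_enat)
qed

lemma triangle_free_induced: "triangle_free E \<Longrightarrow> triangle_free (induced_edges E W)"
  unfolding induced_edges_def by (erule triangle_free_subset) blast

lemma fragile_subgraph: "fragile V E \<Longrightarrow> subgraph V' E' V E \<Longrightarrow> fragile V' E'"
  unfolding fragile_def subgraph_def by (meson subset_trans)

lemma graph_induced:
  assumes "graph V E" and "W \<subseteq> V"
  shows "graph W (induced_edges E W)" "subgraph W (induced_edges E W) V E"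
  using assms by (auto simp: graph_def subgraph_def induced_edges_def intro: finite_subset)

lemma induced_edges_delete_vertex:
  "graph V E \<Longrightarrow> induced_edges E (V - {v}) = {e \<in> E. v \<notin> e}"
  by (auto simp: graph_def induced_edges_def)

lemma not_k_connected_separation:
  assumes g: "graph V E" and "card V \<ge> k + 1" and "\<not> k_connected k V E"
  obtains A B S where "A \<noteq> {}" "B \<noteq> {}" "card S \<le> k - 1" "V = A \<union> B \<union> S"
    "A \<inter> B = {}" "A \<inter> S = {}" "B \<inter> S = {}" "\<forall>e\<in>E. e \<subseteq> A \<union> S \<or> e \<subseteq> B \<union> S"
proof -
  obtain S where S: "S \<subseteq> V" "card S \<le> k - 1"
    and disconnected: "\<not> connected_graph (V - S) {e\<in>E. e \<inter> S = {}}"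
    using assms(2,3) unfolding k_connected_def delete_vertices_def by auto
  define R where "R = (adj_rel {e\<in>E. e \<inter> S = {}})\<^sup>*"
  obtain u v where uv: "u \<in> V - S" "v \<in> V - S" "(u, v) \<notin> R"
    using disconnected unfolding connected_graph_def R_def by auto
  define A where "A = {x \<in> V - S. (u, x) \<in> R}"
  define B where "B = V - S - A"
  have closed: "y \<in> A \<union> S" if "x \<in> A" and e: "{x, y} \<in> E" for x y
  proof (cases "y \<in> S")
    case False
    with that have "(x, y) \<in> adj_rel {e\<in>E. e \<inter> S = {}}"
      by (auto simp: adj_rel_def A_def)
    hence "(u, y) \<in> R" using \<open>x \<in> A\<close> unfolding A_def R_def by auto
    with False graph_edgeD(3)[OF g e] show ?thesis by (auto simp: A_def)
  qed simp
  have sides: "\<forall>e\<in>E. e \<subseteq> A \<union> S \<or> e \<subseteq> B \<union> S"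
  proof
    fix e assume "e \<in> E"
    then obtain x y where e: "e = {x, y}" "x \<in> V" "y \<in> V" "{x, y} \<in> E"
      using graph_edge_obtain[OF g] by metis
    have "{y, x} \<in> E" using e by (simp add: insert_commute)
    show "e \<subseteq> A \<union> S \<or> e \<subseteq> B \<union> S"
      using closed[OF _ e(4)] closed[OF _ \<open>{y, x} \<in> E\<close>] e by (auto simp: B_def)
  qed
  have "u \<in> A" "v \<in> B" using uv by (auto simp: A_def B_def R_def)
  show ?thesis
  proof (rule that[of A B S])
    show "A \<noteq> {}" "B \<noteq> {}" using \<open>u \<in> A\<close> \<open>v \<in> B\<close> by blast+
    show "V = A \<union> B \<union> S" using S(1) by (auto simp: A_def B_def)
  qed (use S sides in \<open>auto simp: A_def B_def\<close>)
qed

lemma small_triangle_free_edge_bound: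
  assumes g: "graph V E" and tf: "triangle_free E" and "card V \<le> 3"
  shows "card E \<le> fragile_edge_bound (card V)"
proof (cases "card V = 3")
  case True
  then obtain a b c where V: "V = {a, b, c}" by (auto simp: card_3_iff)
  have "E \<subseteq> {{a, b}, {b, c}, {a, c}}"
  proof
    fix e assume "e \<in> E"
    with g obtain x y where "e = {x, y}" "x \<noteq> y" "x \<in> V" "y \<in> V" by (rule graph_edge_obtain)
    thus "e \<in> {{a, b}, {b, c}, {a, c}}" using V by (auto simp: insert_commute)
  qed
  moreover have "E \<noteq> {{a, b}, {b, c}, {a, c}}" using tf by (auto simp: triangle_free_def)
  ultimately have "card E < card {{a, b}, {b, c}, {a, c}}" by (intro psubset_card_mono) auto
  also have "\<dots> \<le> 3" by (simp add: card_insert_if)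
  finally show ?thesis using True by (simp add: fragile_edge_bound_def)
next
  case False
  with assms have "card V = 0 \<or> card V = 1 \<or> card V = 2" by linarith
  hence "card V choose 2 \<le> fragile_edge_bound (card V)" by (auto simp: fragile_edge_bound_def)
  thus ?thesis using card_edges_le_choose[OF g] by linarith
qed

lemma fragile_edge_bound_glue:
  assumes "a \<ge> 1" "b \<ge> 1" "s \<le> 2" "a + b + s \<ge> 4"
  shows "fragile_edge_bound (a + s) + fragile_edge_bound (b + s) \<le> fragile_edge_bound (a + b + s)"
  using assms unfolding fragile_edge_bound_def by auto

lemma fragile_triangle_free_edge_bound:
  "graph V E \<Longrightarrow> fragile V E \<Longrightarrow> triangle_free E \<Longrightarrow> card E \<le> fragile_edge_bound (card V)"
proof (induction "card V" arbitrary: V E rule: less_induct)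
  case less
  note g = less.prems(1) and fr = less.prems(2) and tf = less.prems(3)
  show ?case
  proof (cases "card V \<le> 3")
    case True thus ?thesis using small_triangle_free_edge_bound g tf by blast
  next
    case False
    have "subgraph V E V E" using g by (auto simp: subgraph_def graph_def)
    hence "\<not> k_connected 3 V E" using fr g unfolding fragile_def by blast
    moreover have "card V \<ge> 3 + 1" using False by simp
    ultimately obtain A B S where AB: "A \<noteq> {}" "B \<noteq> {}" and S: "card S \<le> 3 - 1"
      and V: "V = A \<union> B \<union> S" and disj: "A \<inter> B = {}" "A \<inter> S = {}" "B \<inter> S = {}"
      and split: "\<forall>e\<in>E. e \<subseteq> A \<union> S \<or> e \<subseteq> B \<union> S"
      using not_k_connected_separation[OF g] by metis
    have fin: "finite A" "finite B" "finite S" using g V by (auto simp: graph_def)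
    have cards: "card (A \<union> S) = card A + card S" "card (B \<union> S) = card B + card S"
      "card V = card A + card B + card S"
      using fin disj unfolding V by (simp_all add: card_Un_disjoint Int_Un_distrib2)
    have pos: "card A \<ge> 1" "card B \<ge> 1" using AB fin by (simp_all add: Suc_le_eq card_gt_0_iff)
    have smaller: "card (A \<union> S) < card V" "card (B \<union> S) < card V"
      using cards pos by linarith+
    have side_bound: "card (induced_edges E W) \<le> fragile_edge_bound (card W)"
      if "W \<subseteq> V" "card W < card V" for W
      by (rule less.hyps[OF that(2) graph_induced(1)[OF g that(1)]
            fragile_subgraph[OF fr graph_induced(2)[OF g that(1)]] triangle_free_induced[OF tf]])
    have "E \<subseteq> induced_edges E (A \<union> S) \<union> induced_edges E (B \<union> S)"
      using split by (auto simp: induced_edges_def)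
    hence "card E \<le> card (induced_edges E (A \<union> S) \<union> induced_edges E (B \<union> S))"
      using finite_edges[OF g] by (intro card_mono) (auto simp: induced_edges_def)
    also have "\<dots> \<le> card (induced_edges E (A \<union> S)) + card (induced_edges E (B \<union> S))"
      by (rule card_Un_le)
    also have "\<dots> \<le> fragile_edge_bound (card A + card S) + fragile_edge_bound (card B + card S)"
      using side_bound[OF _ smaller(1)] side_bound[OF _ smaller(2)] V
      unfolding cards(1,2) by (intro add_mono) blast+
    also have "\<dots> \<le> fragile_edge_bound (card V)"
      unfolding cards(3) using pos S False cards(3) by (intro fragile_edge_bound_glue) simp_all
    finally show ?thesis .
  qed
qed

lemma sum_degree_eq_twice_card_edges:
  assumes g: "graph V E" shows "(\<Sum>v\<in>V. degree E v) = 2 * card E"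
proof -
  have finV: "finite V" using g by (simp add: graph_def)
  have "(\<Sum>v\<in>V. degree E v) = (\<Sum>v\<in>V. \<Sum>e\<in>E. if v \<in> e then 1 else 0)"
    unfolding degree_def using finite_edges[OF g] by (simp add: sum.inter_filter[symmetric])
  also have "\<dots> = (\<Sum>e\<in>E. \<Sum>v\<in>V. if v \<in> e then 1 else 0)" by (rule sum.swap)
  also have "\<dots> = (\<Sum>e\<in>E. card e)"
  proof (rule sum.cong[OF refl])
    fix e assume "e \<in> E"
    have "(\<Sum>v\<in>V. if v \<in> e then 1 else 0) = card {v\<in>V. v \<in> e}"
      using finV by (simp add: sum.inter_filter[symmetric])
    also have "{v\<in>V. v \<in> e} = e" using g \<open>e \<in> E\<close> by (auto simp: graph_def)
    finally show "(\<Sum>v\<in>V. if v \<in> e then 1 else 0) = card e" .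
  qed
  also have "\<dots> = 2 * card E" using g by (simp add: graph_def)
  finally show ?thesis .
qed

lemma fragile_triangle_free_low_degree:
  assumes g: "graph V E" and fr: "fragile V E" and tf: "triangle_free E" and "V \<noteq> {}"
  shows "\<exists>v\<in>V. degree E v \<le> 3"
proof (rule ccontr)
  assume "\<not> ?thesis"
  hence high: "\<forall>v\<in>V. degree E v \<ge> 4" by auto
  have bound: "card E \<le> fragile_edge_bound (card V)"
    using fragile_triangle_free_edge_bound[OF g fr tf] .
  show False
  proof (cases "card V \<ge> 3")
    case True
    have "4 * card V \<le> (\<Sum>v\<in>V. degree E v)"
      using sum_mono[of V "\<lambda>_. 4::nat" "degree E"] high by simp
    also have "\<dots> = 2 * card E" by (rule sum_degree_eq_twice_card_edges[OF g])
    finally show False using bound True unfolding fragile_edge_bound_def by simp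
  next
    case False
    obtain w where "w \<in> V" using \<open>V \<noteq> {}\<close> by auto
    have "degree E w \<le> card E"
      unfolding degree_def using finite_edges[OF g] by (intro card_mono) auto
    moreover have "card E \<le> 1" using bound False unfolding fragile_edge_bound_def
      by (auto split: if_splits)
    ultimately show False using high \<open>w \<in> V\<close> by fastforce
  qed
qed

lemma card_neighbours_le_degree:
  assumes g: "graph V E" shows "card {u. {u, v} \<in> E} \<le> degree E v"
  unfolding degree_def
proof (rule card_inj_on_le[of "\<lambda>u. {u, v}"])
  show "inj_on (\<lambda>u. {u, v}) {u. {u, v} \<in> E}"
    using graph_edgeD(1)[OF g] by (auto simp: inj_on_def doubleton_eq_iff)
  show "finite {e \<in> E. v \<in> e}" using finite_edges[OF g] by simp
qed auto

lemma colourable_extend_low_degree: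
  assumes g: "graph V E" and "v \<in> V" and "degree E v < k"
    and "colourable k (V - {v}) (induced_edges E (V - {v}))"
  shows "colourable k V E"
proof -
  obtain col :: "_ \<Rightarrow> nat" where col_range: "\<forall>x\<in>V - {v}. col x < k"
    and col_proper: "\<forall>x y. {x, y} \<in> E \<and> v \<notin> {x, y} \<longrightarrow> col x \<noteq> col y"
    using assms(4) unfolding colourable_def induced_edges_delete_vertex[OF g] by auto
  define N where "N = {u. {u, v} \<in> E}"
  have "finite N" using graph_edgeD(2)[OF g] g by (auto simp: N_def graph_def intro: finite_subset)
  have "card (col ` N) \<le> card N" using \<open>finite N\<close> by (rule card_image_le)
  also have "\<dots> \<le> degree E v" unfolding N_def by (rule card_neighbours_le_degree[OF g])
  finally have "card (col ` N) < card {0..<k}" using assms(3) by simp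
  hence "\<not> {0..<k} \<subseteq> col ` N"
    using card_mono[OF finite_imageI[OF \<open>finite N\<close>]] by fastforce
  then obtain c where c: "c < k" "c \<notin> col ` N" by (auto simp: subset_iff)
  have "{x, y} \<in> E \<Longrightarrow> (col(v := c)) x \<noteq> (col(v := c)) y" for x y
    using col_proper c graph_edgeD(1)[OF g, of x y] by (auto simp: N_def insert_commute)
  thus ?thesis unfolding colourable_def using col_range c by (intro exI[of _ "col(v := c)"]) auto
qed

lemma fragile_triangle_free_colourable:
  "graph V E \<Longrightarrow> fragile V E \<Longrightarrow> triangle_free E \<Longrightarrow> colourable 4 V E"
proof (induction "card V" arbitrary: V E rule: less_induct)
  case less
  note g = less.prems(1) and fr = less.prems(2) and tf = less.prems(3)
  show ?case
  proof (cases "V = {}")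
    case True
    hence "E = {}" using g by (auto simp: graph_def)
    thus ?thesis using True by (auto simp: colourable_def)
  next
    case False
    then obtain v where v: "v \<in> V" "degree E v \<le> 3"
      using fragile_triangle_free_low_degree[OF g fr tf] by blast
    have smaller: "card (V - {v}) < card V"
      using v g by (intro card_Diff1_less) (auto simp: graph_def)
    have W: "V - {v} \<subseteq> V" by blast
    have "colourable 4 (V - {v}) (induced_edges E (V - {v}))"
      by (rule less.hyps[OF smaller graph_induced(1)[OF g W]
            fragile_subgraph[OF fr graph_induced(2)[OF g W]] triangle_free_induced[OF tf]])
    thus ?thesis using colourable_extend_low_degree[OF g] v by simp
  qed
qed

theorem mainTheorem5:
  fixes V :: "'a set" and E :: "'a set set"
  assumes "graph V E" and "fragile V E" and "girth V E \<ge> 4"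
  shows "(card V \<ge> 3 \<longrightarrow> card E \<le> 2 * card V - 4)
    \<and> (V \<noteq> {} \<longrightarrow> (\<exists>v\<in>V. degree E v \<le> 3) \<and> colourable 4 V E)"
proof -
  have tf: "triangle_free E" using girth_ge_4_imp_triangle_free assms(1,3) .
  show ?thesis
    using fragile_triangle_free_edge_bound[OF assms(1,2) tf]
      fragile_triangle_free_low_degree[OF assms(1,2) tf]
      fragile_triangle_free_colourable[OF assms(1,2) tf]
    unfolding fragile_edge_bound_def by auto
qed

end
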